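(* In the Mallows setting: - $W(N,0)=\theta^{N-1}[N-1]_\theta!$ for all $N\ge1$; - for all $N\ge2$ and $1\le k\le N-1$, $$W(N,k)=\theta^{N-k-1}\,[N-1]_\theta!\,\sum_{i=k}^{N-1}\frac{[k]_\theta}{[i]_\theta}.$$
   Context: Permutations of $\{1,\dots,N\}$ are written in one-line notation; $\mathfrak S_N$ is the set of all of them. An entry $\pi_j$ is a left-to-right maximum if $\pi_j>\pi_i$ for all $i<j$; $\mathrm{inv}(\pi)$ is the number of pairs $i<j$ with $\pi_i>\pi_j$. Let $\theta>0$. For $0\le k\le N-1$, a permutation $\pi\in\mathfrak S_N$ is $k$-winnable if the first index $j>k$ such that $\pi_j$ is a left-to-right maximum satisfies $\pi_j=N$. Mallows setting: - $W(N,k)=\sum_{k\text{-winnable }\pi\in\mathfrak S_N}\theta^{\mathrm{inv}(\pi)}$; - $[m]_\theta=1+\theta+\cdots+\theta^{m-1}$; - $[m]_\theta!=[1]_\theta\cdots[m]_\theta$, with $[0]_\theta!=1$. *)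

theory Defs
  imports Complex_Main "HOL-Combinatorics.Permutations"
begin

text \<open>Permutations of {1..N} in one-line notation: pi_j = p j, with p permutes {1..N}.\<close>

definition perms :: "nat \<Rightarrow> (nat \<Rightarrow> nat) set" where
  "perms N = {p. p permutes {1..N}}"

definition lr_max :: "(nat \<Rightarrow> nat) \<Rightarrow> nat \<Rightarrow> bool" where
  "lr_max p j \<longleftrightarrow> (\<forall>i\<in>{1..<j}. p i < p j)"

definition inv_count :: "nat \<Rightarrow> (nat \<Rightarrow> nat) \<Rightarrow> nat" where
  "inv_count N p = card {(i, j). 1 \<le> i \<and> i < j \<and> j \<le> N \<and> p i > p j}"

definition winnable :: "nat \<Rightarrow> nat \<Rightarrow> (nat \<Rightarrow> nat) \<Rightarrow> bool" where
  "winnable N k p \<longleftrightarrow>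
     (\<exists>j. k < j \<and> j \<le> N \<and> lr_max p j \<and> p j = N \<and>
          (\<forall>j'. k < j' \<and> j' < j \<longrightarrow> \<not> lr_max p j'))"

definition W :: "real \<Rightarrow> nat \<Rightarrow> nat \<Rightarrow> real" where
  "W \<theta> N k = (\<Sum>p\<in>{p\<in>perms N. winnable N k p}. \<theta> ^ inv_count N p)"

definition qint :: "real \<Rightarrow> nat \<Rightarrow> real" where
  "qint \<theta> m = (\<Sum>i<m. \<theta> ^ i)"

definition qfact :: "real \<Rightarrow> nat \<Rightarrow> real" where
  "qfact \<theta> m = (\<Prod>i\<in>{1..m}. qint \<theta> i)"

end

theory Submission
  imports Defs
begin

text \<open>
Every permutation of \<open>{1..n+1}\<close> arises uniquely from its last entry \<open>v\<close> and a permutation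
\<open>q\<close> of \<open>{1..n}\<close> giving the relative order of the first \<open>n\<close> entries. The last entry adds
\<open>n + 1 - v\<close> inversions, the left-to-right maxima among the first \<open>n\<close> positions are those
of \<open>q\<close>, and position \<open>n + 1\<close> is a left-to-right maximum iff \<open>v = n + 1\<close>. Summing over \<open>v\<close>
therefore turns Mallows weights on \<open>{1..n+1}\<close> into \<open>q\<close>-integers times weights on \<open>{1..n}\<close>:
the weight \<open>B(n,k)\<close> of the permutations without left-to-right maxima after position \<open>k\<close>
satisfies \<open>B(n+1,k) = \<theta>[n] B(n,k)\<close>, and \<open>W(n+1,k) = B(n,k) + \<theta>[n] W(n,k)\<close> since a
permutation is \<open>k\<close>-winnable either by ending in \<open>n+1\<close> after no earlier record, or
because \<open>q\<close> is. Solving both recurrences from \<open>B(k,k) = [k]!\<close> and \<open>W(k,k) = 0\<close> gives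
the closed forms.
\<close>

lemma permsD:
  assumes "q \<in> perms n"
  shows perms_in_range: "i \<in> {1..n} \<Longrightarrow> q i \<in> {1..n}"
    and perms_fixed: "i \<notin> {1..n} \<Longrightarrow> q i = i"
    and perms_inj: "i \<in> {1..n} \<Longrightarrow> j \<in> {1..n} \<Longrightarrow> q i = q j \<Longrightarrow> i = j"
    and perms_surj: "x \<in> {1..n} \<Longrightarrow> \<exists>i\<in>{1..n}. q i = x"
proof -
  have p: "q permutes {1..n}" using assms by (simp add: perms_def)
  show "i \<in> {1..n} \<Longrightarrow> q i \<in> {1..n}" using permutes_in_image[OF p] by blast
  show "i \<notin> {1..n} \<Longrightarrow> q i = i" using permutes_not_in[OF p] by blast
  show "i \<in> {1..n} \<Longrightarrow> j \<in> {1..n} \<Longrightarrow> q i = q j \<Longrightarrow> i = j"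
    using permutes_inj_on[OF p] by (meson inj_onD)
  show "x \<in> {1..n} \<Longrightarrow> \<exists>i\<in>{1..n}. q i = x"
    using permutes_image[OF p] by (metis imageE)
qed

lemma finite_perms: "finite (perms n)"
  unfolding perms_def by (rule finite_permutations) simp

subsection \<open>Inserting and deleting the last entry\<close>

definition insert_last :: "nat \<Rightarrow> (nat \<Rightarrow> nat) \<Rightarrow> nat \<Rightarrow> nat \<Rightarrow> nat" where
  "insert_last n q v i =
     (if 1 \<le> i \<and> i \<le> n then (if q i < v then q i else Suc (q i))
      else if i = Suc n then v else i)"

definition delete_last :: "nat \<Rightarrow> (nat \<Rightarrow> nat) \<Rightarrow> nat \<Rightarrow> nat" where
  "delete_last n p i = (if 1 \<le> i \<and> i \<le> n then (if p i < p (Suc n) then p i else p i - 1) else i)"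

lemma insert_last_in_perms:
  assumes q: "q \<in> perms n" and v: "v \<in> {1..Suc n}"
  shows "insert_last n q v \<in> perms (Suc n)"
proof -
  have "inj_on (insert_last n q v) {1..Suc n}"
  proof (rule inj_onI)
    fix i j assume i: "i \<in> {1..Suc n}" and j: "j \<in> {1..Suc n}"
      and eq: "insert_last n q v i = insert_last n q v j"
    show "i = j"
    proof (cases "i \<le> n \<and> j \<le> n")
      case True
      then show ?thesis
        using i j eq perms_inj[OF q, of i j] by (auto simp: insert_last_def split: if_splits)
    next
      case False
      then show ?thesis
        using i j eq by (auto simp: insert_last_def split: if_splits)
    qed
  qed
  moreover have "insert_last n q v i \<in> {1..Suc n}" if "i \<in> {1..Suc n}" for i
    using that v perms_in_range[OF q, of i] by (auto simp: insert_last_def)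
  moreover have "insert_last n q v i = i" if "i \<notin> {1..Suc n}" for i
    using that by (auto simp: insert_last_def)
  ultimately have "insert_last n q v permutes {1..Suc n}"
    by (intro inj_imp_permutes) auto
  then show ?thesis by (simp add: perms_def)
qed

lemma delete_last_in_perms:
  assumes p: "p \<in> perms (Suc n)"
  shows "delete_last n p \<in> perms n"
proof -
  have ne: "p i \<noteq> p (Suc n)" if "i \<in> {1..n}" for i
    using that perms_inj[OF p, of i "Suc n"] by auto
  have range: "p i \<in> {1..Suc n}" if "i \<in> {1..n}" for i
    using that perms_in_range[OF p, of i] by auto
  have last: "p (Suc n) \<in> {1..Suc n}" using perms_in_range[OF p] by simp
  have "inj_on (delete_last n p) {1..n}"
  proof (rule inj_onI)
    fix i j assume i: "i \<in> {1..n}" and j: "j \<in> {1..n}"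
      and eq: "delete_last n p i = delete_last n p j"
    have "p i = p j"
      using eq i j ne[OF i] ne[OF j] range[OF i] range[OF j]
      by (auto simp: delete_last_def split: if_splits)
    then show "i = j" using perms_inj[OF p] i j by auto
  qed
  moreover have "delete_last n p i \<in> {1..n}" if "i \<in> {1..n}" for i
    using that ne[OF that] range[OF that] last by (auto simp: delete_last_def)
  moreover have "delete_last n p i = i" if "i \<notin> {1..n}" for i
    using that by (auto simp: delete_last_def)
  ultimately have "delete_last n p permutes {1..n}"
    by (intro inj_imp_permutes) auto
  then show ?thesis by (simp add: perms_def)
qed

lemma delete_last_insert_last:
  assumes "q \<in> perms n"
  shows "delete_last n (insert_last n q v) = q"
  using perms_fixed[OF assms] by (auto simp: delete_last_def insert_last_def)

lemma insert_last_delete_last: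
  assumes p: "p \<in> perms (Suc n)"
  shows "insert_last n (delete_last n p) (p (Suc n)) = p"
proof
  fix i
  have "i \<in> {1..n} \<Longrightarrow> p i \<noteq> p (Suc n)" using perms_inj[OF p] by fastforce
  then show "insert_last n (delete_last n p) (p (Suc n)) i = p i"
    using perms_fixed[OF p, of i] by (auto simp: delete_last_def insert_last_def)
qed

lemma sum_perms_Suc:
  "(\<Sum>p\<in>perms (Suc n). f p) = (\<Sum>q\<in>perms n. \<Sum>v=1..Suc n. f (insert_last n q v))"
proof -
  have "(\<Sum>p\<in>perms (Suc n). f p) = (\<Sum>(q, v)\<in>perms n \<times> {1..Suc n}. f (insert_last n q v))"
    by (rule sum.reindex_bij_witness[where i = "\<lambda>(q, v). insert_last n q v"
                                       and j = "\<lambda>p. (delete_last n p, p (Suc n))"])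
       (auto simp: insert_last_in_perms delete_last_in_perms delete_last_insert_last
                   insert_last_delete_last dest: perms_in_range[of _ "Suc n" "Suc n"],
        simp add: insert_last_def)
  also have "\<dots> = (\<Sum>q\<in>perms n. \<Sum>v=1..Suc n. f (insert_last n q v))"
    by (rule sum.cartesian_product[symmetric])
  finally show ?thesis .
qed

subsection \<open>Effect of the insertion on inversions and left-to-right maxima\<close>

lemma insert_last_less_iff:
  assumes "i \<in> {1..n}" "j \<in> {1..n}"
  shows "insert_last n q v i < insert_last n q v j \<longleftrightarrow> q i < q j"
  using assms by (auto simp: insert_last_def)

lemma inv_count_insert_last:
  assumes q: "q \<in> perms n" and v: "v \<in> {1..Suc n}"
  shows "inv_count (Suc n) (insert_last n q v) = inv_count n q + (Suc n - v)"
proof -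
  let ?p = "insert_last n q v"
  let ?A = "{(i, j). 1 \<le> i \<and> i < j \<and> j \<le> n \<and> q i > q j}"
  let ?C = "{i\<in>{1..n}. v \<le> q i}"
  have split: "{(i, j). 1 \<le> i \<and> i < j \<and> j \<le> Suc n \<and> ?p i > ?p j} = ?A \<union> (\<lambda>i. (i, Suc n)) ` ?C"
  proof (rule set_eqI, clarify)
    fix i j
    show "(i, j) \<in> {(i, j). 1 \<le> i \<and> i < j \<and> j \<le> Suc n \<and> ?p i > ?p j}
          \<longleftrightarrow> (i, j) \<in> ?A \<union> (\<lambda>i. (i, Suc n)) ` ?C"
    proof (cases "j \<le> n")
      case True
      then show ?thesis using insert_last_less_iff[of j n i q v] by auto
    next
      case False
      then show ?thesis by (auto simp: insert_last_def)
    qed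
  qed
  have "q ` ?C = {v..n}"
  proof
    show "q ` ?C \<subseteq> {v..n}"
      using perms_in_range[OF q] by (simp add: image_subset_iff)
    show "{v..n} \<subseteq> q ` ?C"
    proof
      fix x assume x: "x \<in> {v..n}"
      then have "x \<in> {1..n}" using v by auto
      then obtain i where "i \<in> {1..n}" "q i = x" using perms_surj[OF q] by blast
      then show "x \<in> q ` ?C" using x by auto
    qed
  qed
  moreover have "inj_on q ?C" using perms_inj[OF q] by (simp add: inj_on_def)
  ultimately have "card ?C = Suc n - v" using card_image[of q ?C] by simp
  moreover have "card ((\<lambda>i. (i, Suc n)) ` ?C) = card ?C"
    by (rule card_image) (auto simp: inj_on_def)
  moreover have "finite ?A" by (rule finite_subset[of _ "{1..n} \<times> {1..n}"]) auto
  moreover have "?A \<inter> (\<lambda>i. (i, Suc n)) ` ?C = {}" by auto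
  ultimately show ?thesis
    unfolding inv_count_def split by (simp add: card_Un_disjoint)
qed

lemma power_inv_count_insert_last:
  fixes \<theta> :: real
  assumes "q \<in> perms n" "v \<in> {1..Suc n}"
  shows "\<theta> ^ inv_count (Suc n) (insert_last n q v) = \<theta> ^ inv_count n q * \<theta> ^ (Suc n - v)"
  by (simp only: inv_count_insert_last[OF assms] power_add)

lemma lr_max_insert_last:
  assumes "j \<in> {1..n}"
  shows "lr_max (insert_last n q v) j \<longleftrightarrow> lr_max q j"
  unfolding lr_max_def using assms insert_last_less_iff[of _ n j q v] by auto

lemma lr_max_insert_last_Suc:
  assumes q: "q \<in> perms n" and v: "v \<in> {1..Suc n}"
  shows "lr_max (insert_last n q v) (Suc n) \<longleftrightarrow> v = Suc n"
proof
  assume "v = Suc n"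
  then show "lr_max (insert_last n q v) (Suc n)"
    using perms_in_range[OF q] by (auto simp: lr_max_def insert_last_def less_Suc_eq_le)
next
  assume max: "lr_max (insert_last n q v) (Suc n)"
  show "v = Suc n"
  proof (rule ccontr)
    assume "v \<noteq> Suc n"
    then obtain i where "i \<in> {1..n}" "q i = v" using perms_surj[OF q] v by force
    moreover have "insert_last n q v i < insert_last n q v (Suc n)"
      using max \<open>i \<in> {1..n}\<close> unfolding lr_max_def by auto
    ultimately show False by (auto simp: insert_last_def)
  qed
qed

lemma insert_last_eq_Suc_iff:
  assumes "q \<in> perms n" "j \<in> {1..n}"
  shows "insert_last n q v j = Suc n \<longleftrightarrow> q j = n \<and> v \<le> n"
  using perms_in_range[OF assms] assms(2) by (auto simp: insert_last_def)

definition no_lr_max_after :: "nat \<Rightarrow> nat \<Rightarrow> (nat \<Rightarrow> nat) \<Rightarrow> bool" where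
  "no_lr_max_after n k q \<longleftrightarrow> (\<forall>j. k < j \<and> j \<le> n \<longrightarrow> \<not> lr_max q j)"

lemma no_lr_max_after_insert_last:
  assumes q: "q \<in> perms n" and v: "v \<in> {1..Suc n}" and "k \<le> n"
  shows "no_lr_max_after (Suc n) k (insert_last n q v) \<longleftrightarrow> v \<noteq> Suc n \<and> no_lr_max_after n k q"
  using assms lr_max_insert_last[of _ n q v] lr_max_insert_last_Suc[OF q v]
  unfolding no_lr_max_after_def by (auto simp: le_Suc_eq)

lemma winnable_insert_last:
  assumes q: "q \<in> perms n" and v: "v \<in> {1..Suc n}" and k: "k \<le> n"
  shows "winnable (Suc n) k (insert_last n q v) \<longleftrightarrow>
           (v = Suc n \<and> no_lr_max_after n k q) \<or> (v \<le> n \<and> winnable n k q)"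
proof
  assume "winnable (Suc n) k (insert_last n q v)"
  then obtain j where j: "k < j" "j \<le> Suc n" "lr_max (insert_last n q v) j"
      "insert_last n q v j = Suc n"
    and before: "\<And>j'. k < j' \<and> j' < j \<Longrightarrow> \<not> lr_max (insert_last n q v) j'"
    unfolding winnable_def by blast
  show "(v = Suc n \<and> no_lr_max_after n k q) \<or> (v \<le> n \<and> winnable n k q)"
  proof (cases "j = Suc n")
    case True
    then show ?thesis
      using j(4) before lr_max_insert_last[of _ n q v] k
      by (auto simp: insert_last_def no_lr_max_after_def)
  next
    case False
    then have jn: "j \<in> {1..n}" using j by auto
    then have "q j = n" "v \<le> n" using insert_last_eq_Suc_iff[OF q jn] j(4) by auto
    then show ?thesis
      unfolding winnable_def using j(1,3) jn before lr_max_insert_last[of _ n q v]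
      by (intro disjI2 conjI exI[of _ j]) auto
  qed
next
  assume "(v = Suc n \<and> no_lr_max_after n k q) \<or> (v \<le> n \<and> winnable n k q)"
  then show "winnable (Suc n) k (insert_last n q v)"
  proof
    assume "v = Suc n \<and> no_lr_max_after n k q"
    then show ?thesis
      unfolding winnable_def using k lr_max_insert_last_Suc[OF q v] lr_max_insert_last[of _ n q v]
      by (intro exI[of _ "Suc n"]) (auto simp: insert_last_def no_lr_max_after_def)
  next
    assume a: "v \<le> n \<and> winnable n k q"
    then obtain j where j: "k < j" "j \<le> n" "lr_max q j" "q j = n"
      and before: "\<And>j'. k < j' \<and> j' < j \<Longrightarrow> \<not> lr_max q j'"
      unfolding winnable_def by blast
    then show ?thesis
      unfolding winnable_def using a insert_last_eq_Suc_iff[OF q, of j v] lr_max_insert_last[of _ n q v]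
      by (intro exI[of _ j]) auto
  qed
qed

definition mallows_weight :: "real \<Rightarrow> nat \<Rightarrow> ((nat \<Rightarrow> nat) \<Rightarrow> bool) \<Rightarrow> real" where
  "mallows_weight \<theta> n P = (\<Sum>q\<in>{q\<in>perms n. P q}. \<theta> ^ inv_count n q)"

lemma W_eq_mallows_weight: "W \<theta> n k = mallows_weight \<theta> n (winnable n k)"
  by (simp add: W_def mallows_weight_def)

lemma mallows_weight_Suc:
  "mallows_weight \<theta> (Suc n) P =
     (\<Sum>q\<in>perms n. \<theta> ^ inv_count n q *
        (\<Sum>v=1..Suc n. if P (insert_last n q v) then \<theta> ^ (Suc n - v) else 0))"
proof -
  have "mallows_weight \<theta> (Suc n) P =
          (\<Sum>p\<in>perms (Suc n). if P p then \<theta> ^ inv_count (Suc n) p else 0)"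
    unfolding mallows_weight_def by (rule sum.inter_filter[OF finite_perms])
  also have "\<dots> = (\<Sum>q\<in>perms n. \<Sum>v=1..Suc n.
      if P (insert_last n q v) then \<theta> ^ inv_count (Suc n) (insert_last n q v) else 0)"
    by (rule sum_perms_Suc)
  also have "\<dots> = (\<Sum>q\<in>perms n. \<theta> ^ inv_count n q *
        (\<Sum>v=1..Suc n. if P (insert_last n q v) then \<theta> ^ (Suc n - v) else 0))"
    unfolding sum_distrib_left
    by (intro sum.cong refl) (simp add: power_inv_count_insert_last)
  finally show ?thesis .
qed

lemma sum_power_diff_eq_qint: "(\<Sum>v=1..m. \<theta> ^ (m - v)) = qint \<theta> m"
proof -
  have "(\<Sum>v=1..m. \<theta> ^ (m - v)) = (\<Sum>i<m. \<theta> ^ (m - Suc i))"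
    using sum.atLeast1_atMost_eq[of "\<lambda>v. \<theta> ^ (m - v)" m] by simp
  also have "\<dots> = (\<Sum>i<m. \<theta> ^ i)" by (rule sum.nat_diff_reindex)
  finally show ?thesis by (simp add: qint_def)
qed

lemma sum_power_Suc_diff_eq_qint: "(\<Sum>v=1..n. \<theta> ^ (Suc n - v)) = \<theta> * qint \<theta> n"
proof -
  have "(\<Sum>v=1..n. \<theta> ^ (Suc n - v)) = (\<Sum>v=1..n. \<theta> * \<theta> ^ (n - v))"
    by (rule sum.cong) (auto simp: Suc_diff_le)
  then show ?thesis using sum_power_diff_eq_qint[of \<theta> n] by (simp add: sum_distrib_left[symmetric])
qed

lemma qfact_Suc: "qfact \<theta> (Suc n) = qfact \<theta> n * qint \<theta> (Suc n)"
  by (simp add: qfact_def)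

lemma mallows_weight_all: "mallows_weight \<theta> n (\<lambda>_. True) = qfact \<theta> n"
proof (induction n)
  case 0
  have "perms 0 = {id}" by (auto simp: perms_def)
  moreover have "inv_count 0 id = card ({} :: (nat \<times> nat) set)"
    unfolding inv_count_def by (rule arg_cong[where f = card]) auto
  ultimately show ?case by (simp add: mallows_weight_def qfact_def)
next
  case (Suc n)
  have "mallows_weight \<theta> (Suc n) (\<lambda>_. True) = (\<Sum>q\<in>perms n. \<theta> ^ inv_count n q * qint \<theta> (Suc n))"
    unfolding mallows_weight_Suc by (simp only: if_True sum_power_diff_eq_qint)
  also have "\<dots> = mallows_weight \<theta> n (\<lambda>_. True) * qint \<theta> (Suc n)"
    by (simp add: mallows_weight_def sum_distrib_right)
  finally show ?case by (simp add: Suc.IH qfact_Suc)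
qed

lemma mallows_weight_no_lr_max_after_self:
  assumes "n \<le> k"
  shows "mallows_weight \<theta> n (no_lr_max_after n k) = qfact \<theta> n"
proof -
  have "no_lr_max_after n k = (\<lambda>_. True)" using assms by (auto simp: no_lr_max_after_def fun_eq_iff)
  then show ?thesis by (simp add: mallows_weight_all)
qed

lemma mallows_weight_no_lr_max_after_Suc:
  assumes "k \<le> n"
  shows "mallows_weight \<theta> (Suc n) (no_lr_max_after (Suc n) k) =
           \<theta> * qint \<theta> n * mallows_weight \<theta> n (no_lr_max_after n k)"
proof -
  have "(\<Sum>v=1..Suc n. if no_lr_max_after (Suc n) k (insert_last n q v) then \<theta> ^ (Suc n - v) else 0)
          = (if no_lr_max_after n k q then \<theta> * qint \<theta> n else 0)" if q: "q \<in> perms n" for q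
  proof -
    have "(\<Sum>v=1..Suc n. if no_lr_max_after (Suc n) k (insert_last n q v) then \<theta> ^ (Suc n - v) else 0)
          = (\<Sum>v=1..n. if no_lr_max_after n k q then \<theta> ^ (Suc n - v) else 0)"
      using no_lr_max_after_insert_last[OF q _ assms] by (simp add: atLeastAtMostSuc_conv)
    also have "\<dots> = (if no_lr_max_after n k q then \<theta> * qint \<theta> n else 0)"
      by (cases "no_lr_max_after n k q")
         (simp_all only: if_True if_False sum_power_Suc_diff_eq_qint sum.neutral_const)
    finally show ?thesis .
  qed
  then have "mallows_weight \<theta> (Suc n) (no_lr_max_after (Suc n) k) =
      (\<Sum>q\<in>perms n. \<theta> * qint \<theta> n * (if no_lr_max_after n k q then \<theta> ^ inv_count n q else 0))"
    unfolding mallows_weight_Suc by (intro sum.cong refl) simp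
  then show ?thesis
    by (simp add: mallows_weight_def sum.inter_filter[OF finite_perms] sum_distrib_left)
qed

lemma W_Suc:
  assumes "k \<le> n"
  shows "W \<theta> (Suc n) k = mallows_weight \<theta> n (no_lr_max_after n k) + \<theta> * qint \<theta> n * W \<theta> n k"
proof -
  have "(\<Sum>v=1..Suc n. if winnable (Suc n) k (insert_last n q v) then \<theta> ^ (Suc n - v) else 0)
          = (if no_lr_max_after n k q then 1 else 0) + (if winnable n k q then \<theta> * qint \<theta> n else 0)"
    if q: "q \<in> perms n" for q
  proof -
    have "(\<Sum>v=1..Suc n. if winnable (Suc n) k (insert_last n q v) then \<theta> ^ (Suc n - v) else 0)
          = (\<Sum>v=1..n. if winnable n k q then \<theta> ^ (Suc n - v) else 0)
            + (if no_lr_max_after n k q then 1 else 0)"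
      using winnable_insert_last[OF q _ assms] by (simp add: atLeastAtMostSuc_conv)
    also have "\<dots> = (if no_lr_max_after n k q then 1 else 0) + (if winnable n k q then \<theta> * qint \<theta> n else 0)"
      by (cases "winnable n k q")
         (simp_all only: if_True if_False sum_power_Suc_diff_eq_qint sum.neutral_const add.commute)
    finally show ?thesis .
  qed
  then have "W \<theta> (Suc n) k =
      (\<Sum>q\<in>perms n. (if no_lr_max_after n k q then \<theta> ^ inv_count n q else 0)
         + \<theta> * qint \<theta> n * (if winnable n k q then \<theta> ^ inv_count n q else 0))"
    unfolding W_eq_mallows_weight mallows_weight_Suc by (intro sum.cong refl) (simp add: distrib_left)
  then show ?thesis
    by (simp add: W_eq_mallows_weight mallows_weight_def sum.inter_filter[OF finite_perms]
                  sum.distrib sum_distrib_left)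
qed

lemma W_self: "W \<theta> k k = 0"
proof -
  have "{p\<in>perms k. winnable k k p} = {}" by (auto simp: winnable_def)
  then show ?thesis unfolding W_def by (simp only: sum.empty)
qed

subsection \<open>Solving the recurrences\<close>

lemma qint_pos: "\<theta> > 0 \<Longrightarrow> 1 \<le> i \<Longrightarrow> qint \<theta> i > 0"
  unfolding qint_def by (intro sum_pos) (auto simp: lessThan_empty_iff)

lemma mallows_weight_no_lr_max_after_closed:
  "mallows_weight \<theta> (k + m) (no_lr_max_after (k + m) k) * qint \<theta> (k + m) =
     qint \<theta> k * \<theta> ^ m * qfact \<theta> (k + m)"
proof (induction m)
  case 0
  then show ?case by (simp add: mallows_weight_no_lr_max_after_self)
next
  case (Suc m)
  have "mallows_weight \<theta> (k + Suc m) (no_lr_max_after (k + Suc m) k) * qint \<theta> (k + Suc m) =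
          \<theta> * (mallows_weight \<theta> (k + m) (no_lr_max_after (k + m) k) * qint \<theta> (k + m))
            * qint \<theta> (Suc (k + m))"
    by (simp add: mallows_weight_no_lr_max_after_Suc)
  then show ?case unfolding Suc.IH by (simp add: qfact_Suc mult_ac)
qed

lemma mallows_weight_no_lr_max_after_0: "mallows_weight \<theta> (Suc m) (no_lr_max_after (Suc m) 0) = 0"
  by (induction m) (simp_all add: mallows_weight_no_lr_max_after_Suc qint_def)

lemma W_0_closed: "W \<theta> (Suc m) 0 = \<theta> ^ m * qfact \<theta> m"
proof (induction m)
  case 0
  show ?case using W_Suc[of 0 0 \<theta>] by (simp add: mallows_weight_no_lr_max_after_self W_self qfact_def)
next
  case (Suc m)
  then show ?case
    using W_Suc[of 0 "Suc m" \<theta>] by (simp add: mallows_weight_no_lr_max_after_0 qfact_Suc)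
qed

lemma W_closed:
  assumes "\<theta> > 0" and "1 \<le> k"
  shows "W \<theta> (Suc (k + m)) k = \<theta> ^ m * qfact \<theta> (k + m) * (\<Sum>i=k..k+m. qint \<theta> k / qint \<theta> i)"
proof (induction m)
  case 0
  have "W \<theta> (Suc k) k = qfact \<theta> k"
    using W_Suc[of k k \<theta>] by (simp add: mallows_weight_no_lr_max_after_self W_self)
  moreover have "qint \<theta> k / qint \<theta> k = 1" using qint_pos[OF assms] by simp
  ultimately show ?case by simp
next
  case (Suc m)
  let ?B = "mallows_weight \<theta> (Suc (k + m)) (no_lr_max_after (Suc (k + m)) k)"
  have pos: "qint \<theta> (Suc (k + m)) > 0" using qint_pos[OF assms(1)] by simp
  have "?B * qint \<theta> (Suc (k + m)) = qint \<theta> k * \<theta> ^ Suc m * qfact \<theta> (Suc (k + m))"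
    using mallows_weight_no_lr_max_after_closed[of \<theta> k "Suc m"] by simp
  then have B: "?B = qint \<theta> k * \<theta> ^ Suc m * qfact \<theta> (Suc (k + m)) / qint \<theta> (Suc (k + m))"
    using pos by (simp add: eq_divide_eq)
  have "W \<theta> (Suc (k + Suc m)) k = ?B + \<theta> * qint \<theta> (Suc (k + m)) * W \<theta> (Suc (k + m)) k"
    using W_Suc[of k "Suc (k + m)" \<theta>] by simp
  also have "\<dots> = \<theta> ^ Suc m * qfact \<theta> (Suc (k + m)) *
      (qint \<theta> k / qint \<theta> (Suc (k + m)) + (\<Sum>i=k..k+m. qint \<theta> k / qint \<theta> i))"
    unfolding B Suc.IH qfact_Suc by (simp add: distrib_left mult_ac)
  also have "\<dots> = \<theta> ^ Suc m * qfact \<theta> (k + Suc m) * (\<Sum>i=k..k+Suc m. qint \<theta> k / qint \<theta> i)"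
    by simp
  finally show ?case .
qed

theorem corollary6p4:
  fixes \<theta> :: real
  assumes "\<theta> > 0"
  shows "(\<forall>N\<ge>1. W \<theta> N 0 = \<theta> ^ (N - 1) * qfact \<theta> (N - 1))
       \<and> (\<forall>N\<ge>2. \<forall>k. 1 \<le> k \<and> k \<le> N - 1 \<longrightarrow>
            W \<theta> N k = \<theta> ^ (N - k - 1) * qfact \<theta> (N - 1) *
              (\<Sum>i=k..N-1. qint \<theta> k / qint \<theta> i))"
proof (intro conjI allI impI)
  fix N :: nat assume "N \<ge> 1"
  then obtain m where "N = Suc m" by (cases N) auto
  then show "W \<theta> N 0 = \<theta> ^ (N - 1) * qfact \<theta> (N - 1)" by (simp add: W_0_closed)
next
  fix N k :: nat assume "N \<ge> 2" and k: "1 \<le> k \<and> k \<le> N - 1"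
  define m where "m = N - k - 1"
  have "N = Suc (k + m)" using k \<open>N \<ge> 2\<close> unfolding m_def by linarith
  then show "W \<theta> N k = \<theta> ^ (N - k - 1) * qfact \<theta> (N - 1) * (\<Sum>i=k..N-1. qint \<theta> k / qint \<theta> i)"
    using W_closed[OF assms, of k m] k by simp
qed

end
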